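(* Let $L$ be a multisorted algebra in the positive quantifier-free signature satisfying axioms (1), (2), (3), and let $F$ be a prime filter of the lattice forming sort $n$ of $L$. Let $F_1,\dots,F_n$ be distinct symbols and $W=\{F_1,\dots,F_n\}$. Define $\varphi\colon L\to A(W)$ on each sort $k$ by $$\varphi(r)=\{\alpha^{\mathrm{tuple}}(F_1,\dots,F_n)\mid \alpha\colon k\to n \text{ a substitution with } \alpha(r)\in F\}.$$ Then $\varphi$ is a morphism of positive quantifier-free algebras.
   Context: Signature. There is a sort $n$ for each natural number $n\ge 0$. For every function $\alpha\colon\{1,\dots,n\}\to\{1,\dots,k\}$ there is a unary function symbol ("substitution") $\alpha\colon n\to k$ (argument of sort $n$, value of sort $k$). For each sort there are constants $0,1$ and binary operations $\vee,\wedge$. This is the positive quantifier-free signature. If $\alpha\colon k\to n$, $\beta\colon n\to m$ are substitutions, $\beta\circ\alpha\colon k\to m$ is the substitution symbol of the composite function, while $\beta(\alpha(r))$ is composition inside an algebra. For a set $W$ and substitution $\alpha\colon\{1,\dots,n\}\to\{1,\dots,k\}$: $\alpha^{\mathrm{tuple}}\colon W^k\to W^n$, $\alpha^{\mathrm{tuple}}(x_1,\dots,x_k)=(x_{\alpha(1)},\dots,x_{\alpha(n)})$, and $\alpha^{\mathrm{relation}}(r)=\{\bar x\in W^k:\alpha^{\mathrm{tuple}}(\bar x)\in r\}$ for $r\subseteq W^n$. The positive quantifier-free algebra $A(W)$ interprets sort $n$ as $\mathcal P(W^n)$, $\alpha$ as $\alpha^{\mathrm{relation}}$, and $0,1,\vee,\wedge$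 as $\emptyset,W^n,\cup,\cap$. A morphism is a sort-preserving family of maps commuting with all operations. Axioms: (1) each sort is a bounded distributive lattice under $0,1,\vee,\wedge$; (2) every substitution preserves $0,1,\vee,\wedge$; (3) $(\beta\circ\alpha)(r)=\beta(\alpha(r))$ for all composable substitutions $\alpha\colon k\to n$, $\beta\colon n\to m$ and $r$ of sort $k$. A prime filter of a bounded distributive lattice is a proper, nonempty, upward-closed subset closed under $\wedge$ such that $x\vee y\in F$ implies $x\in F$ or $y\in F$. *)

theory Defs
  imports Main
begin

text \<open>Sorts are natural numbers; all sorts live in one HOL type 'a, with carrier
  pcar k for sort k.  The substitution symbol alpha : n -> k (a function
  {1..n} -> {1..k}) acts by psub n k alpha, from sort n to sort k.\<close>

record 'a pqf_alg =
  pcar  :: "nat \<Rightarrow> 'a set"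
  psub  :: "nat \<Rightarrow> nat \<Rightarrow> (nat \<Rightarrow> nat) \<Rightarrow> 'a \<Rightarrow> 'a"
  pzero :: "nat \<Rightarrow> 'a"
  pone  :: "nat \<Rightarrow> 'a"
  pjoin :: "nat \<Rightarrow> 'a \<Rightarrow> 'a \<Rightarrow> 'a"
  pmeet :: "nat \<Rightarrow> 'a \<Rightarrow> 'a \<Rightarrow> 'a"

text \<open>Substitutions n -> k: functions {1..n} -> {1..k}, represented canonically
  as nat functions that are 0 outside {1..n}.\<close>
definition substs :: "nat \<Rightarrow> nat \<Rightarrow> (nat \<Rightarrow> nat) set" where
  "substs n k = {\<alpha>. (\<forall>i\<in>{1..n}. \<alpha> i \<in> {1..k}) \<and> (\<forall>i. i \<notin> {1..n} \<longrightarrow> \<alpha> i = 0)}"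

definition bounded_distrib_lattice ::
  "'a set \<Rightarrow> 'a \<Rightarrow> 'a \<Rightarrow> ('a \<Rightarrow> 'a \<Rightarrow> 'a) \<Rightarrow> ('a \<Rightarrow> 'a \<Rightarrow> 'a) \<Rightarrow> bool" where
  "bounded_distrib_lattice C z u j m \<longleftrightarrow>
     z \<in> C \<and> u \<in> C \<and> (\<forall>x\<in>C. \<forall>y\<in>C. j x y \<in> C \<and> m x y \<in> C) \<and>
     (\<forall>x\<in>C. \<forall>y\<in>C. \<forall>w\<in>C. j (j x y) w = j x (j y w) \<and> m (m x y) w = m x (m y w)) \<and>
     (\<forall>x\<in>C. \<forall>y\<in>C. j x y = j y x \<and> m x y = m y x) \<and>
     (\<forall>x\<in>C. \<forall>y\<in>C. j x (m x y) = x \<and> m x (j x y) = x) \<and>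
     (\<forall>x\<in>C. \<forall>y\<in>C. \<forall>w\<in>C. m x (j y w) = j (m x y) (m x w)) \<and>
     (\<forall>x\<in>C. j x z = x \<and> m x u = x)"

definition pqf_algebra :: "('a, 'b) pqf_alg_scheme \<Rightarrow> bool" where
  "pqf_algebra L \<longleftrightarrow>
     (\<forall>k. bounded_distrib_lattice (pcar L k) (pzero L k) (pone L k) (pjoin L k) (pmeet L k)) \<and>
     (\<forall>n k \<alpha>. \<alpha> \<in> substs n k \<longrightarrow>
        (\<forall>r\<in>pcar L n. psub L n k \<alpha> r \<in> pcar L k) \<and>
        psub L n k \<alpha> (pzero L n) = pzero L k \<and>
        psub L n k \<alpha> (pone L n) = pone L k \<and>
        (\<forall>r\<in>pcar L n. \<forall>s\<in>pcar L n.
           psub L n k \<alpha> (pjoin L n r s) = pjoin L k (psub L n k \<alpha> r) (psub L n k \<alpha> s) \<and>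
           psub L n k \<alpha> (pmeet L n r s) = pmeet L k (psub L n k \<alpha> r) (psub L n k \<alpha> s))) \<and>
     (\<forall>k n m \<alpha> \<beta>. \<alpha> \<in> substs k n \<longrightarrow> \<beta> \<in> substs n m \<longrightarrow>
        (\<forall>r\<in>pcar L k. psub L k m (\<beta> \<circ> \<alpha>) r = psub L n m \<beta> (psub L k n \<alpha> r)))"

text \<open>Prime filter of a lattice (C, join, meet); order x \<le> y iff meet x y = x.\<close>
definition prime_filter ::
  "'a set \<Rightarrow> ('a \<Rightarrow> 'a \<Rightarrow> 'a) \<Rightarrow> ('a \<Rightarrow> 'a \<Rightarrow> 'a) \<Rightarrow> 'a set \<Rightarrow> bool" where
  "prime_filter C j m F \<longleftrightarrow>
     F \<subseteq> C \<and> F \<noteq> C \<and> F \<noteq> {} \<and>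
     (\<forall>x\<in>F. \<forall>y\<in>C. m x y = x \<longrightarrow> y \<in> F) \<and>
     (\<forall>x\<in>F. \<forall>y\<in>F. m x y \<in> F) \<and>
     (\<forall>x\<in>C. \<forall>y\<in>C. j x y \<in> F \<longrightarrow> x \<in> F \<or> y \<in> F)"

text \<open>Tuples of W^n are lists of length n over W.  For alpha : {1..n} -> {1..k},
  alpha^tuple : W^k -> W^n, (x_1..x_k) |-> (x_alpha(1), .., x_alpha(n)).\<close>
definition tuples :: "'w set \<Rightarrow> nat \<Rightarrow> 'w list set" where
  "tuples W n = {xs. length xs = n \<and> set xs \<subseteq> W}"

definition tuple_sub :: "nat \<Rightarrow> (nat \<Rightarrow> nat) \<Rightarrow> 'w list \<Rightarrow> 'w list" where
  "tuple_sub n \<alpha> xs = map (\<lambda>i. xs ! (\<alpha> i - 1)) [1..<Suc n]"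

definition A_alg :: "'w set \<Rightarrow> 'w list set pqf_alg" where
  "A_alg W = \<lparr> pcar = (\<lambda>n. Pow (tuples W n)),
               psub = (\<lambda>n k \<alpha> r. {xs \<in> tuples W k. tuple_sub n \<alpha> xs \<in> r}),
               pzero = (\<lambda>n. {}),
               pone = (\<lambda>n. tuples W n),
               pjoin = (\<lambda>n r s. r \<union> s),
               pmeet = (\<lambda>n r s. r \<inter> s) \<rparr>"

definition pqf_hom :: "('a, 'c) pqf_alg_scheme \<Rightarrow> ('b, 'd) pqf_alg_scheme \<Rightarrow> (nat \<Rightarrow> 'a \<Rightarrow> 'b) \<Rightarrow> bool" where
  "pqf_hom L M \<phi> \<longleftrightarrow>
     (\<forall>k. \<forall>r\<in>pcar L k. \<phi> k r \<in> pcar M k) \<and>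
     (\<forall>k. \<phi> k (pzero L k) = pzero M k \<and> \<phi> k (pone L k) = pone M k) \<and>
     (\<forall>k. \<forall>r\<in>pcar L k. \<forall>s\<in>pcar L k.
        \<phi> k (pjoin L k r s) = pjoin M k (\<phi> k r) (\<phi> k s) \<and>
        \<phi> k (pmeet L k r s) = pmeet M k (\<phi> k r) (\<phi> k s)) \<and>
     (\<forall>n k \<alpha>. \<alpha> \<in> substs n k \<longrightarrow>
        (\<forall>r\<in>pcar L n. \<phi> k (psub L n k \<alpha> r) = psub M n k \<alpha> (\<phi> n r)))"

end

theory Submission
  imports Defs
begin

text \<open>The substitutions \<alpha> : k \<rightarrow> n with \<alpha>(r) \<in> F record which k-tuples of the generic
  point (F1, ..., Fn) "satisfy" r.  Since the Fi are distinct, \<alpha> \<mapsto> \<alpha>-tuple(F1, ..., Fn) is a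
  bijection between substitutions k \<rightarrow> n and k-tuples over W, so it suffices to show that
  r \<mapsto> {\<alpha>. \<alpha>(r) \<in> F} is a morphism into sets of substitutions: it preserves 0, 1 and \<or>
  because substitutions are lattice morphisms and F is prime, it preserves \<and> because F is
  a filter, and by axiom (3) it turns substitution by \<beta> into precomposition with \<beta>, which
  the bijection carries to \<beta>-relation in A(W).\<close>

lemma bdl_meet_idem:
  assumes "bounded_distrib_lattice C z u j m" "a \<in> C"
  shows "m a a = a"
proof -
  have "j a (m a a) = a" using assms unfolding bounded_distrib_lattice_def by blast
  hence "m a a = m a (j a (m a a))" by simp
  also have "\<dots> = a" using assms unfolding bounded_distrib_lattice_def by blast
  finally show ?thesis .
qed

lemma prime_filter_meet_iff:
  assumes "bounded_distrib_lattice C z u j m" "prime_filter C j m F" "a \<in> C" "b \<in> C"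
  shows "m a b \<in> F \<longleftrightarrow> a \<in> F \<and> b \<in> F"
proof
  assume ab: "m a b \<in> F"
  have idem: "m a a = a" "m b b = b" using bdl_meet_idem assms by metis+
  have "m (m a b) a = m a (m b a)" using assms unfolding bounded_distrib_lattice_def by blast
  also have "\<dots> = m a (m a b)" using assms unfolding bounded_distrib_lattice_def by metis
  also have "\<dots> = m (m a a) b" using assms unfolding bounded_distrib_lattice_def by metis
  finally have below_a: "m (m a b) a = m a b" using idem by simp
  have "m (m a b) b = m a (m b b)" using assms unfolding bounded_distrib_lattice_def by blast
  hence below_b: "m (m a b) b = m a b" using idem by simp
  show "a \<in> F \<and> b \<in> F" using below_a below_b ab assms(2-4) unfolding prime_filter_def by blast
next
  assume "a \<in> F \<and> b \<in> F"
  thus "m a b \<in> F" using assms(2) unfolding prime_filter_def by blast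
qed

lemma prime_filter_join_iff:
  assumes "bounded_distrib_lattice C z u j m" "prime_filter C j m F" "a \<in> C" "b \<in> C"
  shows "j a b \<in> F \<longleftrightarrow> a \<in> F \<or> b \<in> F"
proof
  assume "j a b \<in> F"
  thus "a \<in> F \<or> b \<in> F" using assms(2-4) unfolding prime_filter_def by blast
next
  have join_in: "j a b \<in> C" using assms unfolding bounded_distrib_lattice_def by blast
  have above_a: "m a (j a b) = a" using assms unfolding bounded_distrib_lattice_def by blast
  have "m b (j a b) = m b (j b a)" using assms unfolding bounded_distrib_lattice_def by metis
  also have "\<dots> = b" using assms unfolding bounded_distrib_lattice_def by blast
  finally have above_b: "m b (j a b) = b" .
  assume "a \<in> F \<or> b \<in> F"
  thus "j a b \<in> F" using above_a above_b join_in assms(2) unfolding prime_filter_def by metis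
qed

lemma prime_filter_zero_notin:
  assumes "bounded_distrib_lattice C z u j m" "prime_filter C j m F"
  shows "z \<notin> F"
proof
  assume z: "z \<in> F"
  have "m z y = z" if y: "y \<in> C" for y
  proof -
    have "j z y = y" using assms y unfolding bounded_distrib_lattice_def by metis
    hence "m z y = m z (j z y)" by simp
    also have "\<dots> = z" using assms y unfolding bounded_distrib_lattice_def by blast
    finally show "m z y = z" .
  qed
  hence "C \<subseteq> F" using z assms(2) unfolding prime_filter_def by blast
  thus False using assms(2) unfolding prime_filter_def by blast
qed

lemma prime_filter_one_in:
  assumes "bounded_distrib_lattice C z u j m" "prime_filter C j m F"
  shows "u \<in> F"
proof -
  obtain x where x: "x \<in> F" using assms(2) unfolding prime_filter_def by blast
  hence "x \<in> C" using assms(2) unfolding prime_filter_def by blast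
  hence "m x u = x" "u \<in> C" using assms(1) unfolding bounded_distrib_lattice_def by blast+
  thus ?thesis using x assms(2) unfolding prime_filter_def by blast
qed

lemma pqf_algebra_lattice:
  "pqf_algebra L \<Longrightarrow>
     bounded_distrib_lattice (pcar L k) (pzero L k) (pone L k) (pjoin L k) (pmeet L k)"
  unfolding pqf_algebra_def by blast

lemma pqf_algebra_psub:
  assumes "pqf_algebra L" "\<alpha> \<in> substs m k"
  shows psub_closed: "r \<in> pcar L m \<Longrightarrow> psub L m k \<alpha> r \<in> pcar L k"
    and psub_zero: "psub L m k \<alpha> (pzero L m) = pzero L k"
    and psub_one: "psub L m k \<alpha> (pone L m) = pone L k"
    and psub_join: "\<lbrakk>r \<in> pcar L m; s \<in> pcar L m\<rbrakk> \<Longrightarrow>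
      psub L m k \<alpha> (pjoin L m r s) = pjoin L k (psub L m k \<alpha> r) (psub L m k \<alpha> s)"
    and psub_meet: "\<lbrakk>r \<in> pcar L m; s \<in> pcar L m\<rbrakk> \<Longrightarrow>
      psub L m k \<alpha> (pmeet L m r s) = pmeet L k (psub L m k \<alpha> r) (psub L m k \<alpha> s)"
  using assms unfolding pqf_algebra_def by blast+

lemma psub_comp:
  assumes "pqf_algebra L" "\<alpha> \<in> substs m k" "\<beta> \<in> substs k n" "r \<in> pcar L m"
  shows "psub L m n (\<beta> \<circ> \<alpha>) r = psub L k n \<beta> (psub L m k \<alpha> r)"
  using assms unfolding pqf_algebra_def by blast

lemma substs_comp:
  "\<alpha> \<in> substs m k \<Longrightarrow> \<beta> \<in> substs k n \<Longrightarrow> \<beta> \<circ> \<alpha> \<in> substs m n"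
  unfolding substs_def by auto

definition filter_substs :: "('a, 'c) pqf_alg_scheme \<Rightarrow> nat \<Rightarrow> 'a set \<Rightarrow> nat \<Rightarrow> 'a \<Rightarrow> (nat \<Rightarrow> nat) set"
  where "filter_substs L n F k r = {\<alpha> \<in> substs k n. psub L k n \<alpha> r \<in> F}"

lemma filter_substs_subset: "filter_substs L n F k r \<subseteq> substs k n"
  unfolding filter_substs_def by blast

context
  fixes L :: "('a, 'c) pqf_alg_scheme" and n :: nat and F :: "'a set"
  assumes alg: "pqf_algebra L"
    and prime: "prime_filter (pcar L n) (pjoin L n) (pmeet L n) F"
begin

lemma filter_substs_zero: "filter_substs L n F k (pzero L k) = {}"
  using prime_filter_zero_notin[OF pqf_algebra_lattice[OF alg] prime]
  by (auto simp: filter_substs_def psub_zero[OF alg])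

lemma filter_substs_one: "filter_substs L n F k (pone L k) = substs k n"
  using prime_filter_one_in[OF pqf_algebra_lattice[OF alg] prime]
  by (auto simp: filter_substs_def psub_one[OF alg])

lemma filter_substs_join:
  "r \<in> pcar L k \<Longrightarrow> s \<in> pcar L k \<Longrightarrow>
     filter_substs L n F k (pjoin L k r s) = filter_substs L n F k r \<union> filter_substs L n F k s"
  using prime_filter_join_iff[OF pqf_algebra_lattice[OF alg] prime]
  by (auto simp: filter_substs_def psub_join[OF alg] psub_closed[OF alg])

lemma filter_substs_meet:
  "r \<in> pcar L k \<Longrightarrow> s \<in> pcar L k \<Longrightarrow>
     filter_substs L n F k (pmeet L k r s) = filter_substs L n F k r \<inter> filter_substs L n F k s"
  using prime_filter_meet_iff[OF pqf_algebra_lattice[OF alg] prime]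
  by (auto simp: filter_substs_def psub_meet[OF alg] psub_closed[OF alg])

lemma filter_substs_psub:
  assumes "\<beta> \<in> substs m k" "r \<in> pcar L m"
  shows "filter_substs L n F k (psub L m k \<beta> r)
           = {\<alpha> \<in> substs k n. \<alpha> \<circ> \<beta> \<in> filter_substs L n F m r}"
  using assms by (auto simp: filter_substs_def psub_comp[OF alg] substs_comp)

end

lemma length_tuple_sub [simp]: "length (tuple_sub k \<alpha> xs) = k"
  unfolding tuple_sub_def by simp

lemma nth_tuple_sub: "i < k \<Longrightarrow> tuple_sub k \<alpha> xs ! i = xs ! (\<alpha> (Suc i) - 1)"
  unfolding tuple_sub_def by (simp del: upt_Suc add: nth_map)

lemma tuple_sub_comp:
  assumes "\<alpha> \<in> substs m k"
  shows "tuple_sub m \<alpha> (tuple_sub k \<beta> xs) = tuple_sub m (\<beta> \<circ> \<alpha>) xs"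
proof (rule nth_equalityI)
  fix i assume "i < length (tuple_sub m \<alpha> (tuple_sub k \<beta> xs))"
  hence i: "i < m" by simp
  hence "\<alpha> (Suc i) \<in> {1..k}" using assms unfolding substs_def by auto
  hence "\<alpha> (Suc i) - 1 < k" "Suc (\<alpha> (Suc i) - 1) = \<alpha> (Suc i)" by auto
  thus "tuple_sub m \<alpha> (tuple_sub k \<beta> xs) ! i = tuple_sub m (\<beta> \<circ> \<alpha>) xs ! i"
    using i by (simp add: nth_tuple_sub)
qed simp

lemma inj_on_tuple_sub:
  assumes "length xs = n" "distinct xs"
  shows "inj_on (\<lambda>\<alpha>. tuple_sub k \<alpha> xs) (substs k n)"
proof (rule inj_onI, rule ext)
  fix \<alpha> \<beta> i
  assume \<alpha>: "\<alpha> \<in> substs k n" and \<beta>: "\<beta> \<in> substs k n"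
    and eq: "tuple_sub k \<alpha> xs = tuple_sub k \<beta> xs"
  show "\<alpha> i = \<beta> i"
  proof (cases "i \<in> {1..k}")
    case True
    then obtain j where j: "i = Suc j" "j < k" by (cases i) auto
    have "xs ! (\<alpha> i - 1) = xs ! (\<beta> i - 1)"
      using arg_cong[OF eq, of "\<lambda>ys. ys ! j"] j by (simp add: nth_tuple_sub)
    moreover have "\<alpha> i \<in> {1..n}" "\<beta> i \<in> {1..n}" using True \<alpha> \<beta> unfolding substs_def by auto
    ultimately show ?thesis using assms nth_eq_iff_index_eq by fastforce
  next
    case False
    thus ?thesis using \<alpha> \<beta> unfolding substs_def by auto
  qed
qed

lemma tuple_sub_image:
  assumes "length xs = n"
  shows "(\<lambda>\<alpha>. tuple_sub k \<alpha> xs) ` substs k n = tuples (set xs) k"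
proof
  show "(\<lambda>\<alpha>. tuple_sub k \<alpha> xs) ` substs k n \<subseteq> tuples (set xs) k"
  proof clarify
    fix \<alpha> assume \<alpha>: "\<alpha> \<in> substs k n"
    have "tuple_sub k \<alpha> xs ! i \<in> set xs" if "i < k" for i
    proof -
      have "\<alpha> (Suc i) \<in> {1..n}" using \<alpha> that unfolding substs_def by auto
      hence "\<alpha> (Suc i) - 1 < length xs" using assms by auto
      thus ?thesis using that by (simp add: nth_tuple_sub)
    qed
    thus "tuple_sub k \<alpha> xs \<in> tuples (set xs) k" by (auto simp: tuples_def in_set_conv_nth)
  qed
next
  show "tuples (set xs) k \<subseteq> (\<lambda>\<alpha>. tuple_sub k \<alpha> xs) ` substs k n"
  proof
    fix ys assume "ys \<in> tuples (set xs) k"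
    hence ys: "length ys = k" "set ys \<subseteq> set xs" unfolding tuples_def by auto
    have "\<forall>i<k. ys ! i \<in> set xs" using ys by auto
    hence "\<forall>i<k. \<exists>j<n. xs ! j = ys ! i" using assms by (simp add: in_set_conv_nth)
    then obtain g where g: "\<And>i. i < k \<Longrightarrow> g i < n \<and> xs ! g i = ys ! i" by metis
    define \<beta> where "\<beta> i = (if i \<in> {1..k} then Suc (g (i - 1)) else 0)" for i
    have "\<beta> \<in> substs k n" using g unfolding substs_def \<beta>_def by (auto simp: Suc_le_eq)
    moreover have "ys = tuple_sub k \<beta> xs"
      using g ys(1) by (intro nth_equalityI) (auto simp: nth_tuple_sub \<beta>_def)
    ultimately show "ys \<in> (\<lambda>\<alpha>. tuple_sub k \<alpha> xs) ` substs k n" by blast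
  qed
qed

lemma tuple_sub_image_precomp:
  assumes "length xs = n" "distinct xs" "\<beta> \<in> substs m k" "S \<subseteq> substs m n"
  shows "(\<lambda>\<alpha>. tuple_sub k \<alpha> xs) ` {\<alpha> \<in> substs k n. \<alpha> \<circ> \<beta> \<in> S}
           = {ys \<in> tuples (set xs) k. tuple_sub m \<beta> ys \<in> (\<lambda>\<alpha>. tuple_sub m \<alpha> xs) ` S}"
    (is "?f ` _ = {ys \<in> _. tuple_sub m \<beta> ys \<in> ?g ` S}")
proof -
  have "\<alpha> \<circ> \<beta> \<in> S \<longleftrightarrow> tuple_sub m \<beta> (?f \<alpha>) \<in> ?g ` S" if "\<alpha> \<in> substs k n" for \<alpha>
    unfolding tuple_sub_comp[OF assms(3)]
    by (rule inj_on_image_mem_iff[OF inj_on_tuple_sub[OF assms(1,2)] substs_comp[OF assms(3) that]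
          assms(4), symmetric])
  hence "{\<alpha> \<in> substs k n. \<alpha> \<circ> \<beta> \<in> S} = {\<alpha> \<in> substs k n. tuple_sub m \<beta> (?f \<alpha>) \<in> ?g ` S}"
    by blast
  also have "?f ` \<dots> = {ys \<in> ?f ` substs k n. tuple_sub m \<beta> ys \<in> ?g ` S}"
    by blast
  finally show ?thesis by (simp only: tuple_sub_image[OF assms(1)])
qed

theorem lemma3p3:
  fixes L :: "('a, 'c) pqf_alg_scheme" and n :: nat and F :: "'a set"
    and Fs :: "'w list"
  assumes "pqf_algebra L"
    and "prime_filter (pcar L n) (pjoin L n) (pmeet L n) F"
    and "length Fs = n" and "distinct Fs"
  shows "pqf_hom L (A_alg (set Fs))
           (\<lambda>k r. {tuple_sub k \<alpha> Fs | \<alpha>. \<alpha> \<in> substs k n \<and> psub L k n \<alpha> r \<in> F})"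
proof -
  have repr: "{tuple_sub k \<alpha> Fs | \<alpha>. \<alpha> \<in> substs k n \<and> psub L k n \<alpha> r \<in> F}
                = (\<lambda>\<alpha>. tuple_sub k \<alpha> Fs) ` filter_substs L n F k r" for k r
    by (auto simp: filter_substs_def)
  let ?\<phi> = "\<lambda>k r. (\<lambda>\<alpha>. tuple_sub k \<alpha> Fs) ` filter_substs L n F k r"
  note sub = filter_substs_subset and onto = tuple_sub_image[OF assms(3)]
  have closed: "?\<phi> k r \<subseteq> tuples (set Fs) k" for k r
    unfolding onto[symmetric] by (rule image_mono[OF sub])
  have zero: "?\<phi> k (pzero L k) = {}" for k
    by (simp add: filter_substs_zero[OF assms(1,2)])
  have one: "?\<phi> k (pone L k) = tuples (set Fs) k" for k
    by (simp add: filter_substs_one[OF assms(1,2)] onto)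
  have join: "?\<phi> k (pjoin L k r s) = ?\<phi> k r \<union> ?\<phi> k s"
    if "r \<in> pcar L k" "s \<in> pcar L k" for k r s
    by (simp add: filter_substs_join[OF assms(1,2) that] image_Un)
  have meet: "?\<phi> k (pmeet L k r s) = ?\<phi> k r \<inter> ?\<phi> k s"
    if "r \<in> pcar L k" "s \<in> pcar L k" for k r s
    by (simp add: filter_substs_meet[OF assms(1,2) that] inj_on_image_Int[OF inj_on_tuple_sub[OF assms(3,4)] sub sub])
  have psub: "?\<phi> k (psub L m k \<beta> r) = {ys \<in> tuples (set Fs) k. tuple_sub m \<beta> ys \<in> ?\<phi> m r}"
    if "\<beta> \<in> substs m k" "r \<in> pcar L m" for m k \<beta> r
    unfolding filter_substs_psub[OF assms(1,2) that]
    by (rule tuple_sub_image_precomp[OF assms(3,4) that(1) sub])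
  show ?thesis
    unfolding pqf_hom_def A_alg_def repr using closed zero one join meet psub by simp
qed

end
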